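(* Let $G$ be a graph with vertex set $V$, each vertex carrying a finite-dimensional Hilbert space, let $\alpha$ be a QCA of range $R$, let $F\subseteq V$, and let $\mathcal{P}(\alpha,F)$ be the commutant of $\mathcal{A}(\mathrm{Int}(F))$ in $\alpha(\mathcal{A}(F))$. Then $\mathcal{P}(\alpha,F)$ is a $2R$-locally factorizable algebra.
   Context: For a set $S$ of sites, $\mathcal{A}(S)$ is the algebra of operators supported on $S$ (operators on $\bigotimes_{x\in S}\mathcal{H}_x$ tensored with the identity). A QCA of range $R$ is a $*$-automorphism $\alpha$ of the full operator algebra such that for each site $x$ and each $O$ supported on $\{x\}$, $\alpha(O)$ is supported on sites within graph distance $R$ of $x$. $\mathrm{Int}(F)=\{x: \text{all sites within distance } R \text{ of } x \text{ lie in } F\}$. An algebra $\mathcal{A}$ is $l$-locally factorizable if whenever $O\in\mathcal{A}$ is supported on $T_1\cup T_2$ with $T_1,T_2$ disjoint and $\mathrm{dist}(T_1,T_2)>l$, and $O=\sum_\beta A(\beta)O_1^\beta O_2^\beta$ is a singular value decomposition in the Hilbert–Schmidt inner product ($A(\beta)\ne0$, $O_i^\beta$ supported on $T_i$), then all $O_i^\beta\in\mathcal{A}$. *)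

theory Defs
  imports Complex_Main
begin

text \<open>Sites are the vertices V (finite) of a graph with edge relation E (taken undirected).
 Site x carries the Hilbert space C^(d x); the tensor product basis is indexed by
 configurations. Operators on the full Hilbert space are matrices indexed by configurations.\<close>

type_synonym 'v op = "('v \<Rightarrow> nat) \<Rightarrow> ('v \<Rightarrow> nat) \<Rightarrow> complex"

definition conf :: "'v set \<Rightarrow> ('v \<Rightarrow> nat) \<Rightarrow> ('v \<Rightarrow> nat) set" where
  "conf V d = {s. (\<forall>x\<in>V. s x < d x) \<and> (\<forall>x. x \<notin> V \<longrightarrow> s x = 0)}"

definition Ops :: "'v set \<Rightarrow> ('v \<Rightarrow> nat) \<Rightarrow> 'v op set" where
  "Ops V d = {X. \<forall>s t. (s \<notin> conf V d \<or> t \<notin> conf V d) \<longrightarrow> X s t = 0}"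

definition opmult :: "'v set \<Rightarrow> ('v \<Rightarrow> nat) \<Rightarrow> 'v op \<Rightarrow> 'v op \<Rightarrow> 'v op" where
  "opmult V d X Y = (\<lambda>s t. \<Sum>u\<in>conf V d. X s u * Y u t)"

definition opadj :: "'v op \<Rightarrow> 'v op" where
  "opadj X = (\<lambda>s t. cnj (X t s))"

definition opid :: "'v set \<Rightarrow> ('v \<Rightarrow> nat) \<Rightarrow> 'v op" where
  "opid V d = (\<lambda>s t. if s \<in> conf V d \<and> s = t then 1 else 0)"

definition hs :: "'v set \<Rightarrow> ('v \<Rightarrow> nat) \<Rightarrow> 'v op \<Rightarrow> 'v op \<Rightarrow> complex" where
  "hs V d X Y = (\<Sum>s\<in>conf V d. \<Sum>t\<in>conf V d. cnj (X s t) * Y s t)"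

definition restr :: "'v set \<Rightarrow> ('v \<Rightarrow> nat) \<Rightarrow> ('v \<Rightarrow> nat)" where
  "restr S s = (\<lambda>x. if x \<in> S then s x else 0)"

text \<open>X is supported on S: X = A \<otimes> identity on the sites outside S.\<close>
definition supported_on :: "'v set \<Rightarrow> ('v \<Rightarrow> nat) \<Rightarrow> 'v set \<Rightarrow> 'v op \<Rightarrow> bool" where
  "supported_on V d S X \<longleftrightarrow> X \<in> Ops V d \<and>
     (\<exists>g. \<forall>s\<in>conf V d. \<forall>t\<in>conf V d.
        X s t = (if (\<forall>x\<in>V - S. s x = t x) then g (restr S s) (restr S t) else 0))"

definition alg :: "'v set \<Rightarrow> ('v \<Rightarrow> nat) \<Rightarrow> 'v set \<Rightarrow> 'v op set" where
  "alg V d S = {X. supported_on V d S X}"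

inductive walk :: "('v \<Rightarrow> 'v \<Rightarrow> bool) \<Rightarrow> nat \<Rightarrow> 'v \<Rightarrow> 'v \<Rightarrow> bool" for E where
  walk_refl: "walk E 0 x x"
| walk_step: "E x y \<or> E y x \<Longrightarrow> walk E n y z \<Longrightarrow> walk E (Suc n) x z"

definition within_dist :: "('v \<Rightarrow> 'v \<Rightarrow> bool) \<Rightarrow> nat \<Rightarrow> 'v \<Rightarrow> 'v \<Rightarrow> bool" where
  "within_dist E n x y \<longleftrightarrow> (\<exists>k\<le>n. walk E k x y)"

definition qca :: "'v set \<Rightarrow> ('v \<Rightarrow> nat) \<Rightarrow> ('v \<Rightarrow> 'v \<Rightarrow> bool) \<Rightarrow> nat \<Rightarrow> ('v op \<Rightarrow> 'v op) \<Rightarrow> bool" where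
  "qca V d E R \<alpha> \<longleftrightarrow>
     bij_betw \<alpha> (Ops V d) (Ops V d) \<and>
     (\<forall>X\<in>Ops V d. \<forall>Y\<in>Ops V d. \<forall>c::complex.
        \<alpha> (\<lambda>s t. c * X s t + Y s t) = (\<lambda>s t. c * \<alpha> X s t + \<alpha> Y s t)) \<and>
     (\<forall>X\<in>Ops V d. \<forall>Y\<in>Ops V d. \<alpha> (opmult V d X Y) = opmult V d (\<alpha> X) (\<alpha> Y)) \<and>
     (\<forall>X\<in>Ops V d. \<alpha> (opadj X) = opadj (\<alpha> X)) \<and>
     (\<forall>x\<in>V. \<forall>X\<in>alg V d {x}. \<alpha> X \<in> alg V d {y\<in>V. within_dist E R x y})"

definition Int_reg :: "'v set \<Rightarrow> ('v \<Rightarrow> 'v \<Rightarrow> bool) \<Rightarrow> nat \<Rightarrow> 'v set \<Rightarrow> 'v set" where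
  "Int_reg V E R F = {x\<in>V. \<forall>y\<in>V. within_dist E R x y \<longrightarrow> y \<in> F}"

definition Palg :: "'v set \<Rightarrow> ('v \<Rightarrow> nat) \<Rightarrow> ('v \<Rightarrow> 'v \<Rightarrow> bool) \<Rightarrow> nat \<Rightarrow> ('v op \<Rightarrow> 'v op) \<Rightarrow> 'v set \<Rightarrow> 'v op set" where
  "Palg V d E R \<alpha> F = {X \<in> \<alpha> ` alg V d F.
      \<forall>Y\<in>alg V d (Int_reg V E R F). opmult V d X Y = opmult V d Y X}"

definition is_subalgebra :: "'v set \<Rightarrow> ('v \<Rightarrow> nat) \<Rightarrow> 'v op set \<Rightarrow> bool" where
  "is_subalgebra V d \<A> \<longleftrightarrow> \<A> \<subseteq> Ops V d \<and> opid V d \<in> \<A> \<and>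
     (\<forall>X\<in>\<A>. \<forall>Y\<in>\<A>. \<forall>c::complex. (\<lambda>s t. c * X s t + Y s t) \<in> \<A>) \<and>
     (\<forall>X\<in>\<A>. \<forall>Y\<in>\<A>. opmult V d X Y \<in> \<A>)"

text \<open>l-local factorizability; an SVD is a finite index set B, positive singular values A,
  and Hilbert--Schmidt orthonormal families Q1 (supported on T1), Q2 (supported on T2).\<close>
definition loc_fact :: "'v set \<Rightarrow> ('v \<Rightarrow> nat) \<Rightarrow> ('v \<Rightarrow> 'v \<Rightarrow> bool) \<Rightarrow> nat \<Rightarrow> 'v op set \<Rightarrow> bool" where
  "loc_fact V d E l \<A> \<longleftrightarrow>
    (\<forall>T1 T2 X (B::nat set) (A::nat \<Rightarrow> real) Q1 Q2.
      T1 \<subseteq> V \<and> T2 \<subseteq> V \<and> T1 \<inter> T2 = {} \<and>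
      (\<forall>x\<in>T1. \<forall>y\<in>T2. \<not> within_dist E l x y) \<and>
      X \<in> \<A> \<and> X \<in> alg V d (T1 \<union> T2) \<and>
      finite B \<and> (\<forall>\<beta>\<in>B. A \<beta> > 0) \<and>
      (\<forall>\<beta>\<in>B. Q1 \<beta> \<in> alg V d T1 \<and> Q2 \<beta> \<in> alg V d T2) \<and>
      (\<forall>\<beta>\<in>B. \<forall>\<gamma>\<in>B. hs V d (Q1 \<beta>) (Q1 \<gamma>) = (if \<beta> = \<gamma> then 1 else 0)) \<and>
      (\<forall>\<beta>\<in>B. \<forall>\<gamma>\<in>B. hs V d (Q2 \<beta>) (Q2 \<gamma>) = (if \<beta> = \<gamma> then 1 else 0)) \<and>
      X = (\<lambda>s t. \<Sum>\<beta>\<in>B. complex_of_real (A \<beta>) * opmult V d (Q1 \<beta>) (Q2 \<beta>) s t)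
      \<longrightarrow> (\<forall>\<beta>\<in>B. Q1 \<beta> \<in> \<A> \<and> Q2 \<beta> \<in> \<A>))"

end

theory Submission
  imports Defs "HOL-Library.FuncSet"
begin

text \<open>An operator commuting with every operator supported on a single site x \<in> S is supported
  on V - S: testing the commutation against the matrix units at x shows that its matrix entries
  vanish unless the two configurations agree at x, and do not depend on their common value there.
  Both conditions defining P(\<alpha>,F) are therefore commutation conditions with operators of small
  support: with the single-site operators of Int F, and with the images \<alpha>(Y) of single-site
  operators Y outside F, which are supported in balls of radius R. Such a ball meets at most one
  of two 2R-separated sets T1, T2. If X = \<Sum> a_\<beta> Q1_\<beta> Q2_\<beta> commutes with W supported away from T2, then
  \<Sum> a_\<beta> [Q1_\<beta>, W] Q2_\<beta> = 0, and the Hilbert--Schmidt orthonormality of the Q2_\<beta> forces every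
  [Q1_\<beta>, W] to vanish. So each singular factor inherits all the commutation conditions of X.\<close>

lemma finite_conf: assumes "finite V" shows "finite (conf V d)"
proof -
  have "conf V d \<subseteq> (\<lambda>f x. if x \<in> V then f x else 0) ` (PiE V (\<lambda>x. {..<d x}))"
  proof
    fix s assume s: "s \<in> conf V d"
    have "restrict s V \<in> PiE V (\<lambda>x. {..<d x})" using s by (auto simp: conf_def PiE_iff)
    moreover have "s = (\<lambda>x. if x \<in> V then restrict s V x else 0)" using s by (auto simp: conf_def)
    ultimately show "s \<in> (\<lambda>f x. if x \<in> V then f x else 0) ` (PiE V (\<lambda>x. {..<d x}))" by blast
  qed
  then show ?thesis by (rule finite_subset) (auto intro: finite_PiE assms)
qed

lemma conf_outside: "s \<in> conf V d \<Longrightarrow> x \<notin> V \<Longrightarrow> s x = 0"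
  by (simp add: conf_def)

lemma conf_less: "s \<in> conf V d \<Longrightarrow> x \<in> V \<Longrightarrow> s x < d x"
  by (simp add: conf_def)

lemma conf_upd: "s \<in> conf V d \<Longrightarrow> x \<in> V \<Longrightarrow> i < d x \<Longrightarrow> s(x := i) \<in> conf V d"
  by (auto simp: conf_def)

lemma conf_merge: "s \<in> conf V d \<Longrightarrow> t \<in> conf V d \<Longrightarrow> (\<lambda>x. if x \<in> A then t x else s x) \<in> conf V d"
  by (auto simp: conf_def)

lemma conf_eq_outside:
  "s \<in> conf V d \<Longrightarrow> t \<in> conf V d \<Longrightarrow> \<forall>y\<in>V - S. s y = t y \<Longrightarrow> y \<notin> S \<Longrightarrow> s y = t y"
  by (cases "y \<in> V") (auto simp: conf_outside)

lemma Ops_entry_eq_0: "X \<in> Ops V d \<Longrightarrow> s \<notin> conf V d \<or> t \<notin> conf V d \<Longrightarrow> X s t = 0"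
  by (simp add: Ops_def)

lemma alg_Ops: "X \<in> alg V d S \<Longrightarrow> X \<in> Ops V d"
  by (simp add: alg_def supported_on_def)

lemma alg_entry_eq_0:
  assumes "X \<in> alg V d S" "s \<in> conf V d" "t \<in> conf V d" "x \<in> V" "x \<notin> S" "s x \<noteq> t x"
  shows "X s t = 0"
  using assms by (auto simp: alg_def supported_on_def)

lemma alg_entry_cong:
  assumes "X \<in> alg V d S" "s \<in> conf V d" "t \<in> conf V d" "s' \<in> conf V d" "t' \<in> conf V d"
    "\<forall>x\<in>V - S. s x = t x" "\<forall>x\<in>V - S. s' x = t' x" "restr S s = restr S s'" "restr S t = restr S t'"
  shows "X s t = X s' t'"
  using assms by (auto simp: alg_def supported_on_def)

lemma algI:
  assumes ops: "X \<in> Ops V d"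
    and eq_0: "\<And>s t x. s \<in> conf V d \<Longrightarrow> t \<in> conf V d \<Longrightarrow> x \<in> V \<Longrightarrow> x \<notin> S \<Longrightarrow> s x \<noteq> t x \<Longrightarrow> X s t = 0"
    and cong: "\<And>s t s' t'. s \<in> conf V d \<Longrightarrow> t \<in> conf V d \<Longrightarrow> s' \<in> conf V d \<Longrightarrow> t' \<in> conf V d \<Longrightarrow>
      \<forall>x\<in>V - S. s x = t x \<Longrightarrow> \<forall>x\<in>V - S. s' x = t' x \<Longrightarrow> restr S s = restr S s' \<Longrightarrow>
      restr S t = restr S t' \<Longrightarrow> X s t = X s' t'"
  shows "X \<in> alg V d S"
proof -
  define rep where "rep a b p \<longleftrightarrow> fst p \<in> conf V d \<and> snd p \<in> conf V d \<and>
     (\<forall>x\<in>V - S. fst p x = snd p x) \<and> restr S (fst p) = a \<and> restr S (snd p) = b" for a b p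
  define g where "g a b = X (fst (SOME p. rep a b p)) (snd (SOME p. rep a b p))" for a b
  have "X s t = (if \<forall>x\<in>V - S. s x = t x then g (restr S s) (restr S t) else 0)"
    if s: "s \<in> conf V d" and t: "t \<in> conf V d" for s t
  proof (cases "\<forall>x\<in>V - S. s x = t x")
    case True
    then have "rep (restr S s) (restr S t) (s, t)" using s t by (simp add: rep_def)
    then have "rep (restr S s) (restr S t) (SOME p. rep (restr S s) (restr S t) p)" by (rule someI)
    then have "X s t = g (restr S s) (restr S t)"
      unfolding g_def rep_def using s t True by (intro cong) auto
    with True show ?thesis by simp
  next
    case False
    then show ?thesis using eq_0 s t by auto
  qed
  then show ?thesis using ops by (auto simp: alg_def supported_on_def)
qed

lemma opmult_assoc: "opmult V d (opmult V d X Y) Z = opmult V d X (opmult V d Y Z)"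
  unfolding opmult_def
  by (intro ext) (simp add: sum_distrib_left sum_distrib_right mult.assoc, rule sum.swap)

lemma opmult_lincomb_left:
  "opmult V d (\<lambda>s t. c * X s t + Y s t) Z = (\<lambda>s t. c * opmult V d X Z s t + opmult V d Y Z s t)"
  unfolding opmult_def by (intro ext) (simp add: sum.distrib sum_distrib_left algebra_simps)

lemma opmult_lincomb_right:
  "opmult V d Z (\<lambda>s t. c * X s t + Y s t) = (\<lambda>s t. c * opmult V d Z X s t + opmult V d Z Y s t)"
  unfolding opmult_def by (intro ext) (simp add: sum.distrib sum_distrib_left algebra_simps)

lemma opmult_sum_left:
  "opmult V d (\<lambda>s t. \<Sum>b\<in>B. a b * P b s t) W = (\<lambda>s t. \<Sum>b\<in>B. a b * opmult V d (P b) W s t)"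
  unfolding opmult_def
  by (intro ext) (simp add: sum_distrib_left sum_distrib_right mult.assoc, rule sum.swap)

lemma opmult_sum_right:
  "opmult V d W (\<lambda>s t. \<Sum>b\<in>B. a b * P b s t) = (\<lambda>s t. \<Sum>b\<in>B. a b * opmult V d W (P b) s t)"
  unfolding opmult_def
  by (intro ext) (simp add: sum_distrib_left sum_distrib_right mult_ac, rule sum.swap)

lemma opmult_Ops: "opmult V d X Y \<in> Ops V d" if "X \<in> Ops V d" "Y \<in> Ops V d"
  using that by (auto simp: Ops_def opmult_def)

lemma lincomb_Ops: "X \<in> Ops V d \<Longrightarrow> Y \<in> Ops V d \<Longrightarrow> (\<lambda>s t. c * X s t + Y s t) \<in> Ops V d"
  by (auto simp: Ops_def)

lemma opid_Ops: "opid V d \<in> Ops V d"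
  by (auto simp: Ops_def opid_def)

lemma opid_left: assumes "finite V" "Y \<in> Ops V d" shows "opmult V d (opid V d) Y = Y"
proof (intro ext)
  fix s t
  show "opmult V d (opid V d) Y s t = Y s t"
  proof (cases "s \<in> conf V d")
    case True
    have "opmult V d (opid V d) Y s t = (\<Sum>u\<in>conf V d. if u = s then Y u t else 0)"
      unfolding opmult_def opid_def using True by (intro sum.cong) auto
    also have "\<dots> = Y s t" using True finite_conf[OF assms(1)] by simp
    finally show ?thesis .
  next
    case False then show ?thesis using assms(2) by (simp add: opmult_def opid_def Ops_def)
  qed
qed

lemma opid_right: assumes "finite V" "X \<in> Ops V d" shows "opmult V d X (opid V d) = X"
proof (intro ext)
  fix s t
  show "opmult V d X (opid V d) s t = X s t"
  proof (cases "t \<in> conf V d")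
    case True
    have "opmult V d X (opid V d) s t = (\<Sum>u\<in>conf V d. if u = t then X s u else 0)"
      unfolding opmult_def opid_def using True by (intro sum.cong) auto
    also have "\<dots> = X s t" using True finite_conf[OF assms(1)] by simp
    finally show ?thesis .
  next
    case False
    then show ?thesis using assms(2) by (auto simp: opmult_def opid_def Ops_def intro!: sum.neutral)
  qed
qed

text \<open>For disjoint supports the sum over intermediate configurations has a single nonzero term:
  the configuration that follows t on A and s elsewhere.\<close>
lemma opmult_disjoint_support:
  assumes fin: "finite V" and X: "X \<in> alg V d A" and Y: "Y \<in> alg V d B" and AB: "A \<inter> B = {}"
    and s: "s \<in> conf V d" and t: "t \<in> conf V d"
  shows "opmult V d X Y s t
    = X s (\<lambda>x. if x \<in> A then t x else s x) * Y (\<lambda>x. if x \<in> A then t x else s x) t"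
proof -
  let ?m = "\<lambda>x. if x \<in> A then t x else s x"
  have m: "?m \<in> conf V d" using s t by (rule conf_merge)
  have "X s u * Y u t = 0" if u: "u \<in> conf V d - {?m}" for u
  proof (rule ccontr)
    assume "X s u * Y u t \<noteq> 0"
    then have "\<forall>x\<in>V - A. s x = u x" "\<forall>x\<in>V - B. u x = t x"
      using alg_entry_eq_0[OF X s] alg_entry_eq_0[OF Y _ t] u by (metis DiffD1 DiffD2 mult_eq_0_iff)+
    then have "u x = ?m x" for x
      using AB u s t by (cases "x \<in> V") (auto simp: conf_outside)
    then have "u = ?m" by blast
    with u show False by auto
  qed
  then have "(\<Sum>u\<in>conf V d - {?m}. X s u * Y u t) = 0" by (intro sum.neutral) blast
  then show ?thesis
    unfolding opmult_def by (simp add: sum.remove[OF finite_conf[OF fin] m])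
qed

lemma alg_disjoint_commute:
  assumes fin: "finite V" and X: "X \<in> alg V d A" and Y: "Y \<in> alg V d B" and AB: "A \<inter> B = {}"
  shows "opmult V d X Y = opmult V d Y X"
proof (intro ext)
  fix s t
  show "opmult V d X Y s t = opmult V d Y X s t"
  proof (cases "s \<in> conf V d \<and> t \<in> conf V d")
    case False
    then show ?thesis using Ops_entry_eq_0[OF alg_Ops[OF X]] Ops_entry_eq_0[OF alg_Ops[OF Y]]
      by (auto simp: opmult_def)
  next
    case True
    then have s: "s \<in> conf V d" and t: "t \<in> conf V d" by auto
    let ?m1 = "\<lambda>x. if x \<in> A then t x else s x"
    let ?m2 = "\<lambda>x. if x \<in> B then t x else s x"
    have m1: "?m1 \<in> conf V d" and m2: "?m2 \<in> conf V d" using s t by (simp_all add: conf_merge)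
    have XY: "opmult V d X Y s t = X s ?m1 * Y ?m1 t" by (rule opmult_disjoint_support[OF fin X Y AB s t])
    have YX: "opmult V d Y X s t = Y s ?m2 * X ?m2 t"
      by (rule opmult_disjoint_support[OF fin Y X _ s t]) (use AB in auto)
    show ?thesis
    proof (cases "\<forall>x\<in>V - (A \<union> B). s x = t x")
      case True
      have "X s ?m1 = X ?m2 t"
        by (rule alg_entry_cong[OF X s m1 m2 t]) (use True AB in \<open>auto simp: restr_def fun_eq_iff\<close>)
      moreover have "Y ?m1 t = Y s ?m2"
        by (rule alg_entry_cong[OF Y m1 t s m2]) (use True AB in \<open>auto simp: restr_def fun_eq_iff\<close>)
      ultimately show ?thesis using XY YX by simp
    next
      case False
      then obtain x where x: "x \<in> V" "x \<notin> A" "x \<notin> B" "s x \<noteq> t x" by auto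
      have "Y ?m1 t = 0" by (rule alg_entry_eq_0[OF Y m1 t x(1,3)]) (use x in auto)
      moreover have "X ?m2 t = 0" by (rule alg_entry_eq_0[OF X m2 t x(1,2)]) (use x in auto)
      ultimately show ?thesis using XY YX by simp
    qed
  qed
qed

definition site_unit :: "'v set \<Rightarrow> ('v \<Rightarrow> nat) \<Rightarrow> 'v \<Rightarrow> nat \<Rightarrow> nat \<Rightarrow> 'v op" where
  "site_unit V d x i j = (\<lambda>s t. if s \<in> conf V d \<and> t \<in> conf V d \<and> s x = i \<and> t x = j \<and>
     (\<forall>y. y \<noteq> x \<longrightarrow> s y = t y) then 1 else 0)"

lemma site_unit_alg: "site_unit V d x i j \<in> alg V d {x}"
proof (rule algI)
  show "site_unit V d x i j \<in> Ops V d" by (auto simp: Ops_def site_unit_def)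
next
  fix s t y assume "s \<in> conf V d" "t \<in> conf V d" "y \<in> V" "y \<notin> {x}" "s y \<noteq> t y"
  then show "site_unit V d x i j s t = 0" by (auto simp: site_unit_def)
next
  fix s t s' t' assume s: "s \<in> conf V d" and t: "t \<in> conf V d" and s': "s' \<in> conf V d"
    and t': "t' \<in> conf V d" and "\<forall>y\<in>V - {x}. s y = t y" "\<forall>y\<in>V - {x}. s' y = t' y"
    and "restr {x} s = restr {x} s'" "restr {x} t = restr {x} t'"
  have "\<forall>y. y \<noteq> x \<longrightarrow> s y = t y" "\<forall>y. y \<noteq> x \<longrightarrow> s' y = t' y"
    using conf_eq_outside[OF s t] conf_eq_outside[OF s' t'] \<open>\<forall>y\<in>V - {x}. s y = t y\<close>
      \<open>\<forall>y\<in>V - {x}. s' y = t' y\<close> by auto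
  moreover have "s x = s' x" "t x = t' x"
    using \<open>restr {x} s = restr {x} s'\<close> \<open>restr {x} t = restr {x} t'\<close>
    by (metis restr_def singletonI)+
  ultimately show "site_unit V d x i j s t = site_unit V d x i j s' t'"
    using s t s' t' by (simp add: site_unit_def)
qed

lemma opmult_site_unit_right:
  assumes fin: "finite V" and x: "x \<in> V" and i: "i < d x" and t: "t \<in> conf V d"
  shows "opmult V d Z (site_unit V d x i j) s t = (if t x = j then Z s (t(x := i)) else 0)"
proof -
  have "opmult V d Z (site_unit V d x i j) s t
      = (\<Sum>u\<in>conf V d. if u = t(x := i) then (if t x = j then Z s u else 0) else 0)"
    unfolding opmult_def
  proof (intro sum.cong refl)
    fix u assume "u \<in> conf V d"
    then have "site_unit V d x i j u t = (if u = t(x := i) \<and> t x = j then 1 else 0)"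
      using t conf_upd[OF t x i] by (auto simp: site_unit_def fun_eq_iff)
    then show "Z s u * site_unit V d x i j u t = (if u = t(x := i) then (if t x = j then Z s u else 0) else 0)"
      by auto
  qed
  also have "\<dots> = (if t x = j then Z s (t(x := i)) else 0)"
    using finite_conf[OF fin] conf_upd[OF t x i] by (simp add: sum.delta)
  finally show ?thesis .
qed

lemma opmult_site_unit_left:
  assumes fin: "finite V" and x: "x \<in> V" and j: "j < d x" and s: "s \<in> conf V d"
  shows "opmult V d (site_unit V d x i j) Z s t = (if s x = i then Z (s(x := j)) t else 0)"
proof -
  have "opmult V d (site_unit V d x i j) Z s t
      = (\<Sum>u\<in>conf V d. if u = s(x := j) then (if s x = i then Z u t else 0) else 0)"
    unfolding opmult_def
  proof (intro sum.cong refl)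
    fix u assume "u \<in> conf V d"
    then have "site_unit V d x i j s u = (if u = s(x := j) \<and> s x = i then 1 else 0)"
      using s conf_upd[OF s x j] by (auto simp: site_unit_def fun_eq_iff)
    then show "site_unit V d x i j s u * Z u t = (if u = s(x := j) then (if s x = i then Z u t else 0) else 0)"
      by auto
  qed
  also have "\<dots> = (if s x = i then Z (s(x := j)) t else 0)"
    using finite_conf[OF fin] conf_upd[OF s x j] by (simp add: sum.delta)
  finally show ?thesis .
qed

lemma commute_site_unit_entries:
  assumes fin: "finite V" and x: "x \<in> V" and i: "i < d x" and j: "j < d x"
    and s: "s \<in> conf V d" and t: "t \<in> conf V d"
    and comm: "opmult V d Z (site_unit V d x i j) = opmult V d (site_unit V d x i j) Z"
  shows "(if t x = j then Z s (t(x := i)) else 0) = (if s x = i then Z (s(x := j)) t else 0)"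
  using fun_cong[OF fun_cong[OF comm, of s], of t]
  by (simp add: opmult_site_unit_right[OF fin x i t] opmult_site_unit_left[OF fin x j s])

lemma commutes_site_entry_eq_0:
  assumes fin: "finite V" and x: "x \<in> V"
    and comm: "\<forall>W\<in>alg V d {x}. opmult V d Z W = opmult V d W Z"
    and s: "s \<in> conf V d" and t: "t \<in> conf V d" and "s x \<noteq> t x"
  shows "Z s t = 0"
  using commute_site_unit_entries[OF fin x conf_less[OF t x] conf_less[OF t x] s t
      comm[rule_format, OF site_unit_alg]] \<open>s x \<noteq> t x\<close> by simp

lemma commutes_site_entry_shift:
  assumes fin: "finite V" and x: "x \<in> V"
    and comm: "\<forall>W\<in>alg V d {x}. opmult V d Z W = opmult V d W Z"
    and s: "s \<in> conf V d" and t: "t \<in> conf V d" and "s x = t x" and i: "i < d x"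
  shows "Z s t = Z (s(x := i)) (t(x := i))"
proof -
  have "(s(x := i))(x := t x) = s" using \<open>s x = t x\<close> by auto
  then show ?thesis
    using commute_site_unit_entries[OF fin x i conf_less[OF t x] conf_upd[OF s x i] t
        comm[rule_format, OF site_unit_alg]]
    by simp
qed

lemma commutes_sites_entry_cong:
  assumes fin: "finite V" and K: "finite K" "K \<subseteq> V"
    and comm: "\<forall>x\<in>K. \<forall>W\<in>alg V d {x}. opmult V d Z W = opmult V d W Z"
    and conf: "s \<in> conf V d" "t \<in> conf V d" "s' \<in> conf V d" "t' \<in> conf V d"
    and "\<forall>x\<in>K. s x = t x" "\<forall>x\<in>K. s' x = t' x" "\<forall>x. x \<notin> K \<longrightarrow> s x = s' x \<and> t x = t' x"
  shows "Z s t = Z s' t'"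
  using K comm conf assms(9-)
proof (induction K arbitrary: s t rule: finite_induct)
  case empty
  then show ?case by (simp add: fun_eq_iff)
next
  case (insert x K)
  note conf = insert.prems(3-6)
  have x: "x \<in> V" using insert.prems(1) by simp
  have lt: "s' x < d x" using conf_less[OF conf(3) x] .
  have off: "s y = s' y" "t y = t' y" if "y \<noteq> x" "y \<notin> K" for y
    using insert.prems(9) that by simp_all
  have "Z s t = Z (s(x := s' x)) (t(x := s' x))"
    using commutes_site_entry_shift[OF fin x _ conf(1,2) _ lt] insert.prems(2,7) by simp
  also have "\<dots> = Z s' t'"
  proof (rule insert.IH)
    show "s(x := s' x) \<in> conf V d" "t(x := s' x) \<in> conf V d"
      using conf_upd[OF conf(1) x lt] conf_upd[OF conf(2) x lt] .
    show "\<forall>y\<in>K. (s(x := s' x)) y = (t(x := s' x)) y" using insert.prems(7) by simp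
    show "\<forall>y. y \<notin> K \<longrightarrow> (s(x := s' x)) y = s' y \<and> (t(x := s' x)) y = t' y"
      using off insert.prems(8) by simp
  qed (use insert.prems conf in simp_all)
  finally show ?case .
qed

lemma alg_if_commutes_sites:
  assumes fin: "finite V" and SV: "S \<subseteq> V" and X: "X \<in> Ops V d"
    and comm: "\<forall>x\<in>V - S. \<forall>W\<in>alg V d {x}. opmult V d X W = opmult V d W X"
  shows "X \<in> alg V d S"
proof (rule algI[OF X])
  fix s t x assume "s \<in> conf V d" "t \<in> conf V d" "x \<in> V" "x \<notin> S" "s x \<noteq> t x"
  then show "X s t = 0" using commutes_site_entry_eq_0[OF fin] comm by blast
next
  fix s t s' t' assume conf: "s \<in> conf V d" "t \<in> conf V d" "s' \<in> conf V d" "t' \<in> conf V d"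
    and "\<forall>x\<in>V - S. s x = t x" "\<forall>x\<in>V - S. s' x = t' x"
    and r: "restr S s = restr S s'" "restr S t = restr S t'"
  moreover have "s y = s' y \<and> t y = t' y" if "y \<notin> V - S" for y
    using that conf fun_cong[OF r(1), of y] fun_cong[OF r(2), of y]
    by (cases "y \<in> V") (auto simp: restr_def conf_outside)
  ultimately show "X s t = X s' t'"
    using commutes_sites_entry_cong[OF fin finite_Diff[OF fin] Diff_subset] comm by blast
qed

lemma alg_commutes_site:
  "finite V \<Longrightarrow> X \<in> alg V d S \<Longrightarrow> x \<notin> S \<Longrightarrow> W \<in> alg V d {x} \<Longrightarrow> opmult V d X W = opmult V d W X"
  by (rule alg_disjoint_commute) auto

lemma alg_mult:
  assumes fin: "finite V" and SV: "S \<subseteq> V" and X: "X \<in> alg V d S" and Y: "Y \<in> alg V d S"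
  shows "opmult V d X Y \<in> alg V d S"
proof (rule alg_if_commutes_sites[OF fin SV])
  show "opmult V d X Y \<in> Ops V d" using opmult_Ops alg_Ops X Y by blast
  show "\<forall>x\<in>V - S. \<forall>W\<in>alg V d {x}. opmult V d (opmult V d X Y) W = opmult V d W (opmult V d X Y)"
  proof (intro ballI)
    fix x W assume "x \<in> V - S" "W \<in> alg V d {x}"
    then have XW: "opmult V d X W = opmult V d W X" and YW: "opmult V d Y W = opmult V d W Y"
      using alg_commutes_site[OF fin X] alg_commutes_site[OF fin Y] by auto
    have "opmult V d (opmult V d X Y) W = opmult V d (opmult V d X W) Y" by (simp add: opmult_assoc YW)
    also have "\<dots> = opmult V d W (opmult V d X Y)" by (simp add: opmult_assoc XW)
    finally show "opmult V d (opmult V d X Y) W = opmult V d W (opmult V d X Y)" .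
  qed
qed

lemma alg_lincomb:
  assumes fin: "finite V" and SV: "S \<subseteq> V" and X: "X \<in> alg V d S" and Y: "Y \<in> alg V d S"
  shows "(\<lambda>s t. c * X s t + Y s t) \<in> alg V d S"
proof (rule alg_if_commutes_sites[OF fin SV])
  show "(\<lambda>s t. c * X s t + Y s t) \<in> Ops V d" using lincomb_Ops alg_Ops X Y by blast
  show "\<forall>x\<in>V - S. \<forall>W\<in>alg V d {x}.
      opmult V d (\<lambda>s t. c * X s t + Y s t) W = opmult V d W (\<lambda>s t. c * X s t + Y s t)"
    using alg_commutes_site[OF fin X] alg_commutes_site[OF fin Y]
    by (auto simp: opmult_lincomb_left opmult_lincomb_right)
qed

lemma opid_alg: "finite V \<Longrightarrow> S \<subseteq> V \<Longrightarrow> opid V d \<in> alg V d S"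
  by (rule alg_if_commutes_sites) (auto simp: opid_Ops opid_left opid_right dest: alg_Ops)

lemma alg_mono:
  "finite V \<Longrightarrow> S \<subseteq> S' \<Longrightarrow> S' \<subseteq> V \<Longrightarrow> X \<in> alg V d S \<Longrightarrow> X \<in> alg V d S'"
  by (rule alg_if_commutes_sites) (auto intro: alg_commutes_site dest: alg_Ops)

lemma is_subalgebra_alg: "finite V \<Longrightarrow> S \<subseteq> V \<Longrightarrow> is_subalgebra V d (alg V d S)"
  by (auto simp: is_subalgebra_def intro: alg_Ops opid_alg alg_mult alg_lincomb)

lemma walk_trans: "walk E m x y \<Longrightarrow> walk E n y z \<Longrightarrow> walk E (m + n) x z"
  by (induction rule: walk.induct) (auto intro: walk.intros)

lemma walk_sym: "walk E n x y \<Longrightarrow> walk E n y x"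
proof (induction rule: walk.induct)
  case (walk_refl x)
  then show ?case by (rule walk.walk_refl)
next
  case (walk_step x y n z)
  have "walk E (Suc 0) y x" using walk_step(1) by (auto intro: walk.intros)
  from walk_trans[OF walk_step(3) this] show ?case by simp
qed

lemma ball_disjoint_one_of:
  assumes "\<forall>a\<in>T1. \<forall>b\<in>T2. \<not> within_dist E (2 * R) a b"
  shows "{y\<in>V. within_dist E R x y} \<inter> T1 = {} \<or> {y\<in>V. within_dist E R x y} \<inter> T2 = {}"
proof (rule ccontr)
  assume "\<not> ?thesis"
  then obtain a b where a: "a \<in> T1" "within_dist E R x a" and b: "b \<in> T2" "within_dist E R x b"
    by blast
  then obtain k1 k2 where "k1 \<le> R" "walk E k1 x a" "k2 \<le> R" "walk E k2 x b"
    by (auto simp: within_dist_def)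
  then have "walk E (k1 + k2) a b" and "k1 + k2 \<le> 2 * R" by (auto intro: walk_trans walk_sym)
  then have "within_dist E (2 * R) a b" by (auto simp: within_dist_def)
  then show False using assms a b by blast
qed

lemma qca_Ops: "qca V d E R \<alpha> \<Longrightarrow> X \<in> Ops V d \<Longrightarrow> \<alpha> X \<in> Ops V d"
  by (auto simp: qca_def bij_betw_def)

lemma qca_inj: "qca V d E R \<alpha> \<Longrightarrow> X \<in> Ops V d \<Longrightarrow> Y \<in> Ops V d \<Longrightarrow> \<alpha> X = \<alpha> Y \<Longrightarrow> X = Y"
  by (auto simp: qca_def bij_betw_def inj_on_def)

lemma qca_surj: "qca V d E R \<alpha> \<Longrightarrow> Z \<in> Ops V d \<Longrightarrow> \<exists>X\<in>Ops V d. Z = \<alpha> X"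
  by (auto simp: qca_def bij_betw_def)

lemma qca_mult:
  "qca V d E R \<alpha> \<Longrightarrow> X \<in> Ops V d \<Longrightarrow> Y \<in> Ops V d \<Longrightarrow>
    \<alpha> (opmult V d X Y) = opmult V d (\<alpha> X) (\<alpha> Y)"
  by (auto simp: qca_def)

lemma qca_lincomb:
  "qca V d E R \<alpha> \<Longrightarrow> X \<in> Ops V d \<Longrightarrow> Y \<in> Ops V d \<Longrightarrow>
    \<alpha> (\<lambda>s t. c * X s t + Y s t) = (\<lambda>s t. c * \<alpha> X s t + \<alpha> Y s t)"
  by (auto simp: qca_def)

lemma qca_site_support:
  "qca V d E R \<alpha> \<Longrightarrow> x \<in> V \<Longrightarrow> Y \<in> alg V d {x} \<Longrightarrow> \<alpha> Y \<in> alg V d {y\<in>V. within_dist E R x y}"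
  by (auto simp: qca_def)

lemma qca_opid:
  assumes fin: "finite V" and q: "qca V d E R \<alpha>"
  shows "\<alpha> (opid V d) = opid V d"
proof -
  obtain Z where Z: "Z \<in> Ops V d" "opid V d = \<alpha> Z" using qca_surj[OF q opid_Ops] by blast
  have "opmult V d (\<alpha> (opid V d)) (\<alpha> Z) = \<alpha> Z"
    using qca_mult[OF q opid_Ops Z(1)] opid_left[OF fin Z(1)] by simp
  then show ?thesis using Z(2) opid_right[OF fin qca_Ops[OF q opid_Ops]] by simp
qed

lemma qca_commute_iff:
  assumes q: "qca V d E R \<alpha>" and X: "X \<in> Ops V d" and Y: "Y \<in> Ops V d"
  shows "opmult V d (\<alpha> X) (\<alpha> Y) = opmult V d (\<alpha> Y) (\<alpha> X) \<longleftrightarrow> opmult V d X Y = opmult V d Y X"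
proof
  assume "opmult V d (\<alpha> X) (\<alpha> Y) = opmult V d (\<alpha> Y) (\<alpha> X)"
  then have "\<alpha> (opmult V d X Y) = \<alpha> (opmult V d Y X)" using qca_mult[OF q X Y] qca_mult[OF q Y X] by simp
  then show "opmult V d X Y = opmult V d Y X" by (rule qca_inj[OF q opmult_Ops[OF X Y] opmult_Ops[OF Y X]])
qed (simp flip: qca_mult[OF q X Y] qca_mult[OF q Y X])

lemma is_subalgebra_qca_image:
  assumes fin: "finite V" and q: "qca V d E R \<alpha>" and A: "is_subalgebra V d \<A>"
  shows "is_subalgebra V d (\<alpha> ` \<A>)"
  unfolding is_subalgebra_def
proof (intro conjI ballI allI)
  have ops: "\<A> \<subseteq> Ops V d" using A by (simp add: is_subalgebra_def)
  then show "\<alpha> ` \<A> \<subseteq> Ops V d" using qca_Ops[OF q] by blast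
  show "opid V d \<in> \<alpha> ` \<A>" using A qca_opid[OF fin q] by (metis image_eqI is_subalgebra_def)
  fix X Y assume "X \<in> \<alpha> ` \<A>" "Y \<in> \<alpha> ` \<A>"
  then obtain X' Y' where X': "X' \<in> \<A>" "X = \<alpha> X'" and Y': "Y' \<in> \<A>" "Y = \<alpha> Y'" by blast
  have "opmult V d X' Y' \<in> \<A>" "(\<lambda>s t. c * X' s t + Y' s t) \<in> \<A>" for c
    using A X'(1) Y'(1) by (auto simp: is_subalgebra_def)
  moreover have "opmult V d X Y = \<alpha> (opmult V d X' Y')"
    "(\<lambda>s t. c * X s t + Y s t) = \<alpha> (\<lambda>s t. c * X' s t + Y' s t)" for c
    using qca_mult[OF q, of X' Y'] qca_lincomb[OF q, of X' Y'] subsetD[OF ops X'(1)] subsetD[OF ops Y'(1)]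
      X'(2) Y'(2) by simp_all
  ultimately show "opmult V d X Y \<in> \<alpha> ` \<A>" "(\<lambda>s t. c * X s t + Y s t) \<in> \<alpha> ` \<A>" for c
    by simp_all
qed

lemma is_subalgebra_commutant:
  assumes fin: "finite V" and M: "M \<subseteq> Ops V d" and A: "is_subalgebra V d \<A>"
  shows "is_subalgebra V d {X \<in> \<A>. \<forall>Y\<in>M. opmult V d X Y = opmult V d Y X}"
  unfolding is_subalgebra_def
proof (intro conjI ballI allI)
  show "{X \<in> \<A>. \<forall>Y\<in>M. opmult V d X Y = opmult V d Y X} \<subseteq> Ops V d"
    using A by (auto simp: is_subalgebra_def)
  show "opid V d \<in> {X \<in> \<A>. \<forall>Y\<in>M. opmult V d X Y = opmult V d Y X}"
    using A M opid_left[OF fin] opid_right[OF fin] by (auto simp: is_subalgebra_def)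
  fix X Y assume X: "X \<in> {X \<in> \<A>. \<forall>Y\<in>M. opmult V d X Y = opmult V d Y X}"
    and Y: "Y \<in> {X \<in> \<A>. \<forall>Y\<in>M. opmult V d X Y = opmult V d Y X}"
  then show "(\<lambda>s t. c * X s t + Y s t) \<in> {X \<in> \<A>. \<forall>Y\<in>M. opmult V d X Y = opmult V d Y X}" for c
    using A by (auto simp: is_subalgebra_def opmult_lincomb_left opmult_lincomb_right)
  have "opmult V d (opmult V d X Y) W = opmult V d W (opmult V d X Y)" if "W \<in> M" for W
  proof -
    have "opmult V d (opmult V d X Y) W = opmult V d X (opmult V d W Y)"
      using Y that by (simp add: opmult_assoc)
    also have "\<dots> = opmult V d (opmult V d X W) Y" by (simp add: opmult_assoc)
    also have "\<dots> = opmult V d W (opmult V d X Y)" using X that by (simp add: opmult_assoc)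
    finally show ?thesis .
  qed
  then show "opmult V d X Y \<in> {X \<in> \<A>. \<forall>Y\<in>M. opmult V d X Y = opmult V d Y X}"
    using A X Y by (auto simp: is_subalgebra_def)
qed

lemma Palg_is_subalgebra:
  assumes fin: "finite V" and q: "qca V d E R \<alpha>" and F: "F \<subseteq> V"
  shows "is_subalgebra V d (Palg V d E R \<alpha> F)"
  unfolding Palg_def
  by (rule is_subalgebra_commutant[OF fin _ is_subalgebra_qca_image[OF fin q is_subalgebra_alg[OF fin F]]])
    (use alg_Ops in blast)

lemma opmult_disjoint_support_entry:
  assumes fin: "finite V" and C: "C \<in> alg V d U" and Q: "Q \<in> alg V d T" and UT: "U \<inter> T = {}"
    and s: "s \<in> conf V d" and t: "t \<in> conf V d" and p: "p \<in> conf V d" and q: "q \<in> conf V d"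
    and st: "\<forall>x\<in>V - U. s x = t x" and pq: "\<forall>x\<in>V - T. p x = q x"
  shows "opmult V d C Q (\<lambda>x. if x \<in> T then p x else s x) (\<lambda>x. if x \<in> T then q x else t x)
    = C s t * Q p q"
proof -
  let ?s = "\<lambda>x. if x \<in> T then p x else s x" and ?t = "\<lambda>x. if x \<in> T then q x else t x"
  let ?m = "\<lambda>x. if x \<in> U then ?t x else ?s x"
  have s': "?s \<in> conf V d" and t': "?t \<in> conf V d" and m: "?m \<in> conf V d"
    using s t p q by (simp_all add: conf_merge)
  have "C ?s ?m = C s t"
    by (rule alg_entry_cong[OF C s' m s t]) (use st UT in \<open>auto simp: restr_def fun_eq_iff\<close>)
  moreover have "Q ?m ?t = Q p q"
    by (rule alg_entry_cong[OF Q m t' p q]) (use st pq UT in \<open>auto simp: restr_def fun_eq_iff\<close>)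
  ultimately show ?thesis by (simp add: opmult_disjoint_support[OF fin C Q UT s' t'])
qed

text \<open>Pairing with Q g in the Hilbert--Schmidt inner product isolates the g-th term.\<close>
lemma orthonormal_tensor_sum_eq_0:
  assumes fin: "finite V" and UT: "U \<inter> T = {}" and finB: "finite B" and a: "\<forall>b\<in>B. a b \<noteq> 0"
    and CQ: "\<forall>b\<in>B. C b \<in> alg V d U \<and> Q b \<in> alg V d T"
    and orth: "\<forall>b\<in>B. \<forall>c\<in>B. hs V d (Q b) (Q c) = (if b = c then 1 else 0)"
    and sum_eq_0: "(\<lambda>s t. \<Sum>b\<in>B. a b * opmult V d (C b) (Q b) s t) = (\<lambda>s t. 0)"
    and g: "g \<in> B"
  shows "C g = (\<lambda>s t. 0)"
proof (intro ext)
  fix s t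
  have Cg: "C g \<in> alg V d U" using CQ g by auto
  show "C g s t = 0"
  proof (cases "s \<in> conf V d \<and> t \<in> conf V d \<and> (\<forall>x\<in>V - U. s x = t x)")
    case False
    then show ?thesis using Ops_entry_eq_0[OF alg_Ops[OF Cg]] alg_entry_eq_0[OF Cg] by blast
  next
    case True
    then have s: "s \<in> conf V d" and t: "t \<in> conf V d" and st: "\<forall>x\<in>V - U. s x = t x" by auto
    have inner: "(\<Sum>b\<in>B. a b * C b s t * Q b p q) = 0" if p: "p \<in> conf V d" and q: "q \<in> conf V d" for p q
    proof (cases "\<forall>x\<in>V - T. p x = q x")
      case False
      then have "Q b p q = 0" if "b \<in> B" for b using alg_entry_eq_0[of "Q b" V d T p q] CQ that p q by auto
      then show ?thesis by simp
    next
      case True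
      let ?s = "\<lambda>x. if x \<in> T then p x else s x" and ?t = "\<lambda>x. if x \<in> T then q x else t x"
      have "(\<Sum>b\<in>B. a b * C b s t * Q b p q) = (\<Sum>b\<in>B. a b * opmult V d (C b) (Q b) ?s ?t)"
        using opmult_disjoint_support_entry[OF fin _ _ UT s t p q st True] CQ
        by (intro sum.cong) (auto simp: mult.assoc)
      also have "\<dots> = 0" using fun_cong[OF fun_cong[OF sum_eq_0, of ?s], of ?t] by simp
      finally show ?thesis .
    qed
    have "a g * C g s t = (\<Sum>b\<in>B. if g = b then a b * C b s t else 0)" using finB g by simp
    also have "\<dots> = (\<Sum>b\<in>B. a b * C b s t * hs V d (Q g) (Q b))"
      using orth g by (intro sum.cong refl) auto
    also have "\<dots> = (\<Sum>p\<in>conf V d. \<Sum>q\<in>conf V d. cnj (Q g p q) * (\<Sum>b\<in>B. a b * C b s t * Q b p q))"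
      by (simp add: hs_def sum_distrib_left mult_ac sum.swap[of _ B])
    also have "\<dots> = 0" using inner by simp
    finally show ?thesis using a g by simp
  qed
qed

lemma svd_factor_commute:
  assumes fin: "finite V" and T1V: "T1 \<subseteq> V" and T2V: "T2 \<subseteq> V" and disj: "T1 \<inter> T2 = {}"
    and finB: "finite B" and a: "\<forall>b\<in>B. a b \<noteq> 0"
    and Q: "\<forall>b\<in>B. Q1 b \<in> alg V d T1 \<and> Q2 b \<in> alg V d T2"
    and orth: "\<forall>b\<in>B. \<forall>c\<in>B. hs V d (Q2 b) (Q2 c) = (if b = c then 1 else 0)"
    and X: "X = (\<lambda>s t. \<Sum>b\<in>B. a b * opmult V d (Q1 b) (Q2 b) s t)"
    and W: "W \<in> alg V d U" and UV: "U \<subseteq> V" and U: "U \<inter> T1 = {} \<or> U \<inter> T2 = {}"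
    and XW: "opmult V d X W = opmult V d W X" and g: "g \<in> B"
  shows "opmult V d (Q1 g) W = opmult V d W (Q1 g)"
proof (cases "U \<inter> T1 = {}")
  case True
  show ?thesis by (rule alg_disjoint_commute[OF fin _ W]) (use Q g True in auto)
next
  case False
  with U have UT2: "U \<inter> T2 = {}" by auto
  define C where "C b = (\<lambda>s t. (-1) * opmult V d W (Q1 b) s t + opmult V d (Q1 b) W s t)" for b
  have TU: "T1 \<union> U \<subseteq> V" using T1V UV by auto
  have WU: "W \<in> alg V d (T1 \<union> U)" by (rule alg_mono[OF fin _ TU W]) auto
  have CQ: "\<forall>b\<in>B. C b \<in> alg V d (T1 \<union> U) \<and> Q2 b \<in> alg V d T2"
  proof
    fix b assume b: "b \<in> B"
    have "Q1 b \<in> alg V d (T1 \<union> U)" by (rule alg_mono[OF fin _ TU]) (use Q b in auto)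
    then have "C b \<in> alg V d (T1 \<union> U)"
      unfolding C_def by (intro alg_lincomb[OF fin TU] alg_mult[OF fin TU] WU)
    then show "C b \<in> alg V d (T1 \<union> U) \<and> Q2 b \<in> alg V d T2" using Q b by auto
  qed
  have Q2W: "opmult V d (Q2 b) W = opmult V d W (Q2 b)" if "b \<in> B" for b
    by (rule alg_disjoint_commute[OF fin _ W]) (use Q that UT2 in auto)
  have XW_sum: "opmult V d X W = (\<lambda>s t. \<Sum>b\<in>B. a b * opmult V d (opmult V d (Q1 b) W) (Q2 b) s t)"
    unfolding X opmult_sum_left using Q2W by (intro ext sum.cong refl) (simp add: opmult_assoc)
  have WX_sum: "opmult V d W X = (\<lambda>s t. \<Sum>b\<in>B. a b * opmult V d (opmult V d W (Q1 b)) (Q2 b) s t)"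
    unfolding X by (simp add: opmult_sum_right opmult_assoc)
  have "(\<lambda>s t. \<Sum>b\<in>B. a b * opmult V d (C b) (Q2 b) s t) = (\<lambda>s t. opmult V d X W s t - opmult V d W X s t)"
    unfolding XW_sum WX_sum C_def opmult_lincomb_left by (simp add: sum_subtractf[symmetric] algebra_simps)
  also have "\<dots> = (\<lambda>s t. 0)" using XW by simp
  finally have "C g = (\<lambda>s t. 0)"
    by (intro orthonormal_tensor_sum_eq_0[OF fin _ finB a CQ orth _ g]) (use disj UT2 in auto)
  then show ?thesis unfolding C_def by (auto simp: fun_eq_iff dest!: fun_cong)
qed

lemma Palg_commutes_qca_site:
  assumes fin: "finite V" and q: "qca V d E R \<alpha>" and X: "X \<in> Palg V d E R \<alpha> F"
    and x: "x \<notin> F" and Y: "Y \<in> alg V d {x}"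
  shows "opmult V d X (\<alpha> Y) = opmult V d (\<alpha> Y) X"
proof -
  obtain X' where X': "X' \<in> alg V d F" "X = \<alpha> X'" using X by (auto simp: Palg_def)
  have "opmult V d X' Y = opmult V d Y X'" by (rule alg_commutes_site[OF fin X'(1) x Y])
  then show ?thesis using qca_commute_iff[OF q alg_Ops[OF X'(1)] alg_Ops[OF Y]] X'(2) by simp
qed

lemma Palg_svd_left_factor:
  assumes fin: "finite V" and q: "qca V d E R \<alpha>" and F: "F \<subseteq> V"
    and T1V: "T1 \<subseteq> V" and T2V: "T2 \<subseteq> V" and disj: "T1 \<inter> T2 = {}"
    and sep: "\<forall>a\<in>T1. \<forall>b\<in>T2. \<not> within_dist E (2 * R) a b"
    and XP: "X \<in> Palg V d E R \<alpha> F"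
    and finB: "finite B" and a: "\<forall>b\<in>B. a b \<noteq> 0"
    and Q: "\<forall>b\<in>B. Q1 b \<in> alg V d T1 \<and> Q2 b \<in> alg V d T2"
    and orth: "\<forall>b\<in>B. \<forall>c\<in>B. hs V d (Q2 b) (Q2 c) = (if b = c then 1 else 0)"
    and X: "X = (\<lambda>s t. \<Sum>b\<in>B. a b * opmult V d (Q1 b) (Q2 b) s t)"
    and g: "g \<in> B"
  shows "Q1 g \<in> Palg V d E R \<alpha> F"
proof -
  note factor_commute = svd_factor_commute[OF fin T1V T2V disj finB a Q orth X _ _ _ _ g]
  have Q1g: "Q1 g \<in> alg V d T1" using Q g by auto
  have IntV: "Int_reg V E R F \<subseteq> V" by (auto simp: Int_reg_def)
  have "Q1 g \<in> alg V d (V - Int_reg V E R F)"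
  proof (rule alg_if_commutes_sites[OF fin Diff_subset alg_Ops[OF Q1g]], intro ballI)
    fix x W assume x: "x \<in> V - (V - Int_reg V E R F)" and W: "W \<in> alg V d {x}"
    have "W \<in> alg V d (Int_reg V E R F)" by (rule alg_mono[OF fin _ IntV W]) (use x in auto)
    then have XW: "opmult V d X W = opmult V d W X" using XP by (auto simp: Palg_def)
    show "opmult V d (Q1 g) W = opmult V d W (Q1 g)"
      by (rule factor_commute[OF W _ _ XW]) (use x disj in auto)
  qed
  then have Q1g_comm: "\<forall>Y\<in>alg V d (Int_reg V E R F). opmult V d (Q1 g) Y = opmult V d Y (Q1 g)"
    using alg_disjoint_commute[OF fin] by blast
  obtain Z where Z: "Z \<in> Ops V d" "Q1 g = \<alpha> Z" using qca_surj[OF q alg_Ops[OF Q1g]] by blast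
  have "Z \<in> alg V d F"
  proof (rule alg_if_commutes_sites[OF fin F Z(1)], intro ballI)
    fix x Y assume x: "x \<in> V - F" and Y: "Y \<in> alg V d {x}"
    have "opmult V d (Q1 g) (\<alpha> Y) = opmult V d (\<alpha> Y) (Q1 g)"
    proof (rule factor_commute)
      show "\<alpha> Y \<in> alg V d {y\<in>V. within_dist E R x y}" using qca_site_support[OF q _ Y] x by simp
      show "opmult V d X (\<alpha> Y) = opmult V d (\<alpha> Y) X"
        using Palg_commutes_qca_site[OF fin q XP _ Y] x by simp
    qed (use ball_disjoint_one_of[OF sep] in auto)
    then show "opmult V d Z Y = opmult V d Y Z" using qca_commute_iff[OF q Z(1) alg_Ops[OF Y]] Z(2) by simp
  qed
  then show ?thesis using Q1g_comm Z(2) by (auto simp: Palg_def)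
qed

lemma Palg_loc_fact:
  assumes fin: "finite V" and q: "qca V d E R \<alpha>" and F: "F \<subseteq> V"
  shows "loc_fact V d E (2 * R) (Palg V d E R \<alpha> F)"
  unfolding loc_fact_def
proof (intro allI impI ballI, elim conjE)
  fix T1 T2 X and B :: "nat set" and A :: "nat \<Rightarrow> real" and Q1 Q2 b
  assume T1V: "T1 \<subseteq> V" and T2V: "T2 \<subseteq> V" and disj: "T1 \<inter> T2 = {}"
    and sep: "\<forall>x\<in>T1. \<forall>y\<in>T2. \<not> within_dist E (2 * R) x y"
    and XP: "X \<in> Palg V d E R \<alpha> F"
    and "X \<in> alg V d (T1 \<union> T2)" \<comment> \<open>unused: implied by the supports of the factors\<close>
    and finB: "finite B" and A: "\<forall>\<beta>\<in>B. A \<beta> > 0"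
    and Q: "\<forall>\<beta>\<in>B. Q1 \<beta> \<in> alg V d T1 \<and> Q2 \<beta> \<in> alg V d T2"
    and orth1: "\<forall>\<beta>\<in>B. \<forall>\<gamma>\<in>B. hs V d (Q1 \<beta>) (Q1 \<gamma>) = (if \<beta> = \<gamma> then 1 else 0)"
    and orth2: "\<forall>\<beta>\<in>B. \<forall>\<gamma>\<in>B. hs V d (Q2 \<beta>) (Q2 \<gamma>) = (if \<beta> = \<gamma> then 1 else 0)"
    and X: "X = (\<lambda>s t. \<Sum>\<beta>\<in>B. complex_of_real (A \<beta>) * opmult V d (Q1 \<beta>) (Q2 \<beta>) s t)"
    and b: "b \<in> B"
  have A_ne_0: "\<forall>\<beta>\<in>B. complex_of_real (A \<beta>) \<noteq> 0" using A by auto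
  have sep': "\<forall>x\<in>T2. \<forall>y\<in>T1. \<not> within_dist E (2 * R) x y"
    using sep by (meson walk_sym within_dist_def)
  have Q': "\<forall>\<beta>\<in>B. Q2 \<beta> \<in> alg V d T2 \<and> Q1 \<beta> \<in> alg V d T1" using Q by blast
  have "opmult V d (Q1 \<beta>) (Q2 \<beta>) = opmult V d (Q2 \<beta>) (Q1 \<beta>)" if "\<beta> \<in> B" for \<beta>
    using alg_disjoint_commute[OF fin _ _ disj] Q that by blast
  then have X': "X = (\<lambda>s t. \<Sum>\<beta>\<in>B. complex_of_real (A \<beta>) * opmult V d (Q2 \<beta>) (Q1 \<beta>) s t)"
    unfolding X by (intro ext sum.cong refl) simp
  have "Q1 b \<in> Palg V d E R \<alpha> F"
    by (rule Palg_svd_left_factor[OF fin q F T1V T2V disj sep XP finB A_ne_0 Q orth2 X b])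
  moreover have "Q2 b \<in> Palg V d E R \<alpha> F"
    using disj by (intro Palg_svd_left_factor[OF fin q F T2V T1V _ sep' XP finB A_ne_0 Q' orth1 X' b]) auto
  ultimately show "Q1 b \<in> Palg V d E R \<alpha> F \<and> Q2 b \<in> Palg V d E R \<alpha> F" ..
qed

theorem mainTheorem18:
  fixes V :: "'v set" and d :: "'v \<Rightarrow> nat" and E :: "'v \<Rightarrow> 'v \<Rightarrow> bool"
    and R :: nat and \<alpha> :: "'v op \<Rightarrow> 'v op" and F :: "'v set"
  assumes "finite V"
    and "qca V d E R \<alpha>"
    and "F \<subseteq> V"
  shows "is_subalgebra V d (Palg V d E R \<alpha> F) \<and> loc_fact V d E (2 * R) (Palg V d E R \<alpha> F)"
  using Palg_is_subalgebra[OF assms] Palg_loc_fact[OF assms] by blast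

end
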